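(* Let $\underline{\mathbb{G}}=(\mathbb{G},\mathcal{V},\omega_{\mathcal{V}},\mathcal{F},\omega_{\mathcal{F}})$ be a packaged ribbon graph and suppose its dual is $\underline{\mathbb{G}}^*=(\mathbb{G}^*,\mathcal{V}^*,\omega_{\mathcal{V}^*},\mathcal{F}^*,\omega_{\mathcal{F}^*})$. Then $q_\Gamma(\underline{\mathbb{G}}_\mathcal{V}) = p_\Gamma(\underline{\mathbb{G}}^*_{\mathcal{F}^*})$ and $p_\Gamma(\underline{\mathbb{G}}_{\mathcal{F}}) = q_\Gamma(\underline{\mathbb{G}}^*_{\mathcal{V}^*})$.
   Context: A packaged ribbon graph is a tuple $\underline{\mathbb{G}}=(\mathbb{G},\mathcal{V},\omega_{\mathcal{V}},\mathcal{F},\omega_{\mathcal{F}})$ where $\mathbb{G}=(V,E)$ is an orientable ribbon graph with set of boundary components $F$, $\mathcal{V}$ is a partition of $V$, $\mathcal{F}$ is a partition of $F$, and $\omega_{\mathcal{V}}:\mathcal{V}\to\mathbb{N}_0$, $\omega_{\mathcal{F}}:\mathcal{F}\to\mathbb{N}_0$ are weightings of the blocks. The dual $\underline{\mathbb{G}}^*$ has underlying ribbon graph the geometric dual $\mathbb{G}^*$; since vertices of $\mathbb{G}$ correspond to boundary components of $\mathbb{G}^*$ and boundary components of $\mathbb{G}$ correspond to vertices of $\mathbb{G}^*$, the vertex partition/weighting $\mathcal{V}^*,\omega_{\mathcal{V}^*}$ of $\underline{\mathbb{G}}^*$ is induced by $\mathcal{F},\omega_{\mathcal{F}}$, and the boundary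 partition/weighting $\mathcal{F}^*,\omega_{\mathcal{F}^*}$ is induced by $\mathcal{V},\omega_{\mathcal{V}}$. The packaging $G(\mathbb{G};\mathcal{V})$ is the graph with vertex set $\mathcal{V}$ (weighted by $\omega_{\mathcal{V}}$) and an edge $([u],[v])$ for each edge $(u,v)$ of $\mathbb{G}$, where $[v]$ denotes the block of $v$. For a subgraph $K$ of $G(\mathbb{G};\mathcal{V})$, $\mathbb{G}[K]$ is the ribbon subgraph of $\mathbb{G}$ consisting of all vertices of $\mathbb{G}$ lying in blocks that are vertices of $K$ and the edges of $\mathbb{G}$ corresponding to edges of $K$; $\omega_{\mathcal{V}}(K)=\sum_{[v]\in V(K)}\omega_{\mathcal{V}}([v])$. The packaging $G(\mathbb{G}^*;\mathcal{F})$ is defined analogously using $\mathbb{G}^*$ and the partition $\mathcal{F}$ of its vertices. Write $\underline{\mathbb{G}}_\mathcal{V}:=(\mathbb{G},\mathcal{V},\omega_{\mathcal{V}})$ and $\underline{\mathbb{G}}_\mathcal{F}:=(\mathbb{G},\mathcal{F},\omega_{\mathcal{F}})$. For a subgraph $K$ of $G(\mathbb{G};\mathcal{V})$, $\underline{\mathbb{G}}_\mathcal{V}[K]:=(\mathbb{G}[K],\mathcal{V}',\omega_{\mathcal{V}}')$ with $\mathcal{V}',\omega_{\mathcal{V}}'$ the restrictions of $\mathcal{V},\omega_{\mathcal{V}}$. For a subgraph $H$ of $G(\mathbb{G}^*;\mathcal{F})$, $\underline{\mathbb{G}}_\mathcal{F}[H]:=((\mathbb{G}^*[H])^*,\mathcal{F}',\omega_{\mathcal{F}}')$,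 where boundary components of $(\mathbb{G}^*[H])^*$ correspond naturally to boundary components of $\mathbb{G}$ and $\mathcal{F}',\omega_{\mathcal{F}}'$ are the restrictions of $\mathcal{F},\omega_{\mathcal{F}}$ under this correspondence. For $A\subseteq E$, $(\underline{\mathbb{G}}|A)_\mathcal{V}$ is $(\mathbb{G}|A,\mathcal{V},\omega_{\mathcal{V}})$ (deleting edges does not change the vertex partition or its weights), and $(\underline{\mathbb{G}}/A^c)_\mathcal{F}$ is $\mathbb{G}/A^c$ (contraction of the edges $A^c=E\setminus A$) with boundary partition and weights carried over from $\mathcal{F},\omega_{\mathcal{F}}$ via the natural correspondence between boundary components of $\mathbb{G}$ and of $\mathbb{G}/A^c$. Let $\Gamma$ be a finite group whose irreducible representations have dimensions $n_1,\dots,n_k$; $v,e,f$ denote numbers of vertices, edges and boundary components, and $\omega_{\mathcal{V}}(\mathbb{G})$, $\omega_{\mathcal{F}}(\mathbb{G})$ total block weights. If $G(\mathbb{G};\mathcal{V})$ is connected, $q_\Gamma^1(\underline{\mathbb{G}}_\mathcal{V}):=|\Gamma|^{e(\mathbb{G})-|\mathcal{V}|}\sum_{k} n_{k}^{f(\mathbb{G})-e(\mathbb{G})+|\mathcal{V}|-\omega_{\mathcal{V}}(\mathbb{G})}$; otherwise $q_\Gamma^1(\underline{\mathbb{G}}_\mathcal{V}):=\prod_{K} q_\Gamma^1(\underline{\mathbb{G}}_\mathcal{V}[K])$ over the connected components $K$ of $G(\mathbb{G};\mathcal{V})$; and $q_\Gamma(\underline{\mathbb{G}}_\mathcal{V}):=\sum_{A\subseteq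 E}(-1)^{|A^c|}q_\Gamma^1((\underline{\mathbb{G}}|A)_\mathcal{V})$. If $G(\mathbb{G}^*;\mathcal{F})$ is connected, $p_\Gamma^1(\underline{\mathbb{G}}_\mathcal{F}):=|\Gamma|^{e(\mathbb{G})-|\mathcal{F}|}\sum_{k} n_{k}^{v(\mathbb{G})-e(\mathbb{G})+|\mathcal{F}|-\omega_{\mathcal{F}}(\mathbb{G})}$; otherwise $p_\Gamma^1(\underline{\mathbb{G}}_\mathcal{F}):=\prod_{H} p_\Gamma^1(\underline{\mathbb{G}}_\mathcal{F}[H])$ over the connected components $H$ of $G(\mathbb{G}^*;\mathcal{F})$; and $p_\Gamma(\underline{\mathbb{G}}_\mathcal{F}):=\sum_{A\subseteq E}(-1)^{|A^c|}p_\Gamma^1((\underline{\mathbb{G}}/A^c)_\mathcal{F})$. *)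

theory Defs
  imports Complex_Main "HOL-Combinatorics.Permutations" "HOL-Combinatorics.Orbits"
          "HOL-Library.Disjoint_Sets"
begin

text \<open>A ribbon graph is given by a finite set of darts (half-edges), a fixed-point-free
involution alp (the two darts of an edge), a permutation sig (cyclic order of darts around
each vertex), a set of vertex labels and a set of boundary-component labels.  Vertices with
darts are the sig-orbits, boundary components with darts are the orbits of phi = sig o alp.
Isolated vertices (no darts) are allowed; each of them has exactly one boundary component,
given by the bijection iso.  This models exactly orientable ribbon graphs.\<close>

record ('d,'v,'f) rg =
  darts :: "'d set"
  alp   :: "'d \<Rightarrow> 'd"
  sig   :: "'d \<Rightarrow> 'd"
  verts :: "'v set"
  faces :: "'f set"
  vt    :: "'d \<Rightarrow> 'v"
  fc    :: "'d \<Rightarrow> 'f"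
  iso   :: "'v \<Rightarrow> 'f"

definition phi :: "('d,'v,'f) rg \<Rightarrow> 'd \<Rightarrow> 'd" where
  "phi G = sig G \<circ> alp G"

definition ribbon_graph :: "('d,'v,'f) rg \<Rightarrow> bool" where
  "ribbon_graph G \<longleftrightarrow>
     finite (darts G) \<and> finite (verts G) \<and> finite (faces G) \<and>
     alp G permutes darts G \<and> (\<forall>d\<in>darts G. alp G (alp G d) = d \<and> alp G d \<noteq> d) \<and>
     sig G permutes darts G \<and>
     (\<forall>d\<in>darts G. vt G d \<in> verts G) \<and>
     (\<forall>d\<in>darts G. \<forall>d'\<in>darts G. vt G d = vt G d' \<longleftrightarrow> d' \<in> orbit (sig G) d) \<and>
     (\<forall>d\<in>darts G. fc G d \<in> faces G) \<and>
     (\<forall>d\<in>darts G. \<forall>d'\<in>darts G. fc G d = fc G d' \<longleftrightarrow> d' \<in> orbit (phi G) d) \<and>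
     bij_betw (iso G) (verts G - vt G ` darts G) (faces G - fc G ` darts G)"

definition edges :: "('d,'v,'f) rg \<Rightarrow> 'd set set" where
  "edges G = {{d, alp G d} | d. d \<in> darts G}"

definition first_return :: "('d \<Rightarrow> 'd) \<Rightarrow> 'd set \<Rightarrow> 'd \<Rightarrow> 'd" where
  "first_return f S d =
     (if d \<in> S then (f ^^ (LEAST k. 0 < k \<and> (f ^^ k) d \<in> S)) d else d)"

definition restr :: "('d \<Rightarrow> 'd) \<Rightarrow> 'd set \<Rightarrow> 'd \<Rightarrow> 'd" where
  "restr f S d = (if d \<in> S then f d else d)"

definition dual :: "('d,'v,'f) rg \<Rightarrow> ('d,'f,'v) rg" where
  "dual G = \<lparr> darts = darts G, alp = alp G, sig = phi G,
              verts = faces G, faces = verts G, vt = fc G, fc = vt G,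
              iso = inv_into (verts G - vt G ` darts G) (iso G) \<rparr>"

text \<open>Ribbon subgraph with vertex set W and edge set A (edges of G with ends in W).\<close>
definition sub :: "('d,'v,'f) rg \<Rightarrow> 'v set \<Rightarrow> 'd set set \<Rightarrow> ('d,'v,'d set + 'v) rg" where
  "sub G W A =
     (let S = \<Union>A; s' = first_return (sig G) S; a' = restr (alp G) S in
      \<lparr> darts = S, alp = a', sig = s', verts = W,
        faces = {Inl (orbit (s' \<circ> a') d) | d. d \<in> S} \<union> Inr ` (W - vt G ` S),
        vt = vt G, fc = (\<lambda>d. Inl (orbit (s' \<circ> a') d)), iso = Inr \<rparr>)"

definition del :: "('d,'v,'f) rg \<Rightarrow> 'd set set \<Rightarrow> ('d,'v,'d set + 'v) rg" where
  "del G A = sub G (verts G) A"   (* G|A: keep the edges A, delete the others *)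

text \<open>Contraction G/B of a set B of edges, G/B = (G^B) - B with G^B the partial dual.
 In the combinatorial-map model G^B has vertex rotation sig o alp_B (alp_B = alp on the darts
 of B, identity elsewhere); deleting the darts of B gives the rotation below.\<close>
definition contract :: "('d,'v,'f) rg \<Rightarrow> 'd set set \<Rightarrow> ('d,'d set + 'f,'f) rg" where
  "contract G B =
     (let S = darts G - \<Union>B; s' = first_return (sig G \<circ> restr (alp G) (\<Union>B)) S;
          a' = restr (alp G) S in
      \<lparr> darts = S, alp = a', sig = s',
        verts = {Inl (orbit s' d) | d. d \<in> S} \<union> Inr ` (faces G - fc G ` S),
        faces = faces G,
        vt = (\<lambda>d. Inl (orbit s' d)), fc = fc G,
        iso = case_sum (\<lambda>_. undefined) id \<rparr>)"

definition blk :: "'v set set \<Rightarrow> 'v \<Rightarrow> 'v set" where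
  "blk P v = (THE b. b \<in> P \<and> v \<in> b)"

definition pk_adj :: "('d,'v,'f) rg \<Rightarrow> 'v set set \<Rightarrow> ('v set \<times> 'v set) set" where
  "pk_adj G P = {(blk P (vt G d), blk P (vt G (alp G d))) | d. d \<in> darts G}"

definition pk_comps :: "('d,'v,'f) rg \<Rightarrow> 'v set set \<Rightarrow> 'v set set set" where
  "pk_comps G P = {{b' \<in> P. (b, b') \<in> (pk_adj G P)\<^sup>*} | b. b \<in> P}"

definition pk_connected :: "('d,'v,'f) rg \<Rightarrow> 'v set set \<Rightarrow> bool" where
  "pk_connected G P \<longleftrightarrow> pk_comps G P = {P}"

definition comp_edges :: "('d,'v,'f) rg \<Rightarrow> 'v set set \<Rightarrow> 'v set set \<Rightarrow> 'd set set" where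
  "comp_edges G P K = {e \<in> edges G. \<exists>d\<in>e. blk P (vt G d) \<in> K}"

section \<open>The invariants q and p (Gamma given by its order gam and irrep dimensions ns)\<close>

definition q1conn :: "real \<Rightarrow> nat list \<Rightarrow> ('d,'v,'f) rg \<Rightarrow> 'v set set \<Rightarrow> ('v set \<Rightarrow> nat) \<Rightarrow> real" where
  "q1conn gam ns G P w =
     gam powi (int (card (edges G)) - int (card P)) *
     sum_list (map (\<lambda>n. real n powi (int (card (faces G)) - int (card (edges G))
                                       + int (card P) - int (\<Sum>b\<in>P. w b))) ns)"

definition q1 :: "real \<Rightarrow> nat list \<Rightarrow> ('d,'v,'f) rg \<Rightarrow> 'v set set \<Rightarrow> ('v set \<Rightarrow> nat) \<Rightarrow> real" where
  "q1 gam ns G P w =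
     (if pk_connected G P then q1conn gam ns G P w
      else (\<Prod>K\<in>pk_comps G P. q1conn gam ns (sub G (\<Union>K) (comp_edges G P K)) K w))"

definition q :: "real \<Rightarrow> nat list \<Rightarrow> ('d,'v,'f) rg \<Rightarrow> 'v set set \<Rightarrow> ('v set \<Rightarrow> nat) \<Rightarrow> real" where
  "q gam ns G P w =
     (\<Sum>A\<in>Pow (edges G). (-1) ^ card (edges G - A) * q1 gam ns (del G A) P w)"

definition p1conn :: "real \<Rightarrow> nat list \<Rightarrow> ('d,'v,'f) rg \<Rightarrow> 'f set set \<Rightarrow> ('f set \<Rightarrow> nat) \<Rightarrow> real" where
  "p1conn gam ns G P w =
     gam powi (int (card (edges G)) - int (card P)) *
     sum_list (map (\<lambda>n. real n powi (int (card (verts G)) - int (card (edges G))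
                                       + int (card P) - int (\<Sum>b\<in>P. w b))) ns)"

text \<open>Here P partitions the boundary components of G, i.e. the vertices of dual G; the
 packaging is G(G^*;P), and G_P[H] = ((G^*[H])^*, restricted P, w).\<close>
definition p1 :: "real \<Rightarrow> nat list \<Rightarrow> ('d,'v,'f) rg \<Rightarrow> 'f set set \<Rightarrow> ('f set \<Rightarrow> nat) \<Rightarrow> real" where
  "p1 gam ns G P w =
     (if pk_connected (dual G) P then p1conn gam ns G P w
      else (\<Prod>H\<in>pk_comps (dual G) P.
              p1conn gam ns (dual (sub (dual G) (\<Union>H) (comp_edges (dual G) P H))) H w))"

definition p :: "real \<Rightarrow> nat list \<Rightarrow> ('d,'v,'f) rg \<Rightarrow> 'f set set \<Rightarrow> ('f set \<Rightarrow> nat) \<Rightarrow> real" where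
  "p gam ns G P w =
     (\<Sum>A\<in>Pow (edges G). (-1) ^ card (edges G - A) * p1 gam ns (contract G (edges G - A)) P w)"

end

theory Submission
  imports Defs
begin

text \<open>For A \<subseteq> E, deleting the edges outside A from G and contracting them in the dual
  are dual operations: (G^*/A^c)^* = G|A as ribbon graphs.  Since p is
  defined through the packaging of the dual, every summand p^1 of p(G^*) is the
  corresponding summand q^1 of q(G).  The second identity is the first one for
  G^*, because G^** = G.  The identities hold for arbitrary partitions,
  weights and dimension data, so only the hypothesis ribbon_graph G is used.\<close>

text \<open>The part of ribbon_graph that is needed and, unlike the labelling conditions,
  is visibly preserved by dual.\<close>
definition comb_map :: "('d,'v,'f) rg \<Rightarrow> bool" where
  "comb_map G \<longleftrightarrow> finite (darts G) \<and> alp G permutes darts G \<and>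
     (\<forall>d\<in>darts G. alp G (alp G d) = d) \<and> sig G permutes darts G"

lemma ribbon_graph_imp_comb_map: "ribbon_graph G \<Longrightarrow> comb_map G"
  unfolding ribbon_graph_def comb_map_def by blast

lemma darts_dual [simp]: "darts (dual G) = darts G"
  and alp_dual [simp]: "alp (dual G) = alp G"
  and sig_dual [simp]: "sig (dual G) = sig G \<circ> alp G"
  and verts_dual [simp]: "verts (dual G) = faces G"
  and faces_dual [simp]: "faces (dual G) = verts G"
  and vt_dual [simp]: "vt (dual G) = fc G"
  and fc_dual [simp]: "fc (dual G) = vt G"
  by (simp_all add: dual_def phi_def)

lemma edges_dual [simp]: "edges (dual G) = edges G"
  by (simp add: edges_def)

lemma comb_map_dual: "comb_map G \<Longrightarrow> comb_map (dual G)"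
  unfolding comb_map_def by (auto intro: permutes_compose)

lemma comb_map_alp_alp [simp]: "comb_map G \<Longrightarrow> alp G (alp G d) = d"
  unfolding comb_map_def by (cases "d \<in> darts G") (auto simp: permutes_not_in)

lemma q1_iso_update [simp]: "q1 gam ns (G\<lparr>iso := i\<rparr>) P w = q1 gam ns G P w"
  by (simp add: q1_def q1conn_def pk_connected_def pk_comps_def pk_adj_def comp_edges_def
      edges_def sub_def)

lemma p_iso_update [simp]: "p gam ns (G\<lparr>iso := i\<rparr>) P w = p gam ns G P w"
  by (simp add: p_def edges_def contract_def)

lemma p1_eq_q1_dual: "p1 gam ns G P w = q1 gam ns (dual G) P w"
  by (simp add: p1_def q1_def p1conn_def q1conn_def)

lemma dual_dual:
  assumes "comb_map G"
  shows "(dual (dual G))\<lparr>iso := iso G\<rparr> = G"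
  using assms by (intro rg.equality) (simp_all add: fun_eq_iff)

lemma funpow_eq_before_return:
  assumes agree: "\<And>x. x \<notin> S \<Longrightarrow> h x = s x" and step: "h d = s a"
    and "0 < k" and "\<And>j. 0 < j \<Longrightarrow> j < k \<Longrightarrow> (s ^^ j) a \<notin> S"
  shows "(h ^^ k) d = (s ^^ k) a"
  using assms(3,4)
proof (induction k)
  case 0
  then show ?case by simp
next
  case (Suc k)
  show ?case
  proof (cases "k = 0")
    case True
    then show ?thesis using step by simp
  next
    case False
    then have "(h ^^ k) d = (s ^^ k) a" and "(s ^^ k) a \<notin> S" using Suc by auto
    then show ?thesis using agree by simp
  qed
qed

lemma first_return_eqI:
  assumes agree: "\<And>x. x \<notin> S \<Longrightarrow> h x = s x" and step: "h d = s a"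
    and "d \<in> S" "a \<in> S" and returns: "\<exists>k>0. (s ^^ k) a \<in> S"
  shows "first_return h S d = first_return s S a"
proof -
  define m where "m = (LEAST k. 0 < k \<and> (s ^^ k) a \<in> S)"
  have m: "0 < m" "(s ^^ m) a \<in> S"
    using LeastI_ex[OF returns] unfolding m_def by auto
  have before: "(s ^^ j) a \<notin> S" if "0 < j" "j < m" for j
    using not_less_Least[of j] that unfolding m_def by blast
  have eq: "(h ^^ j) d = (s ^^ j) a" if "0 < j" "j \<le> m" for j
    using funpow_eq_before_return[OF agree step, where k = j] that before by simp
  have "(LEAST k. 0 < k \<and> (h ^^ k) d \<in> S) = m"
  proof (rule Least_equality)
    show "0 < m \<and> (h ^^ m) d \<in> S" using m eq by simp
  next
    fix k assume "0 < k \<and> (h ^^ k) d \<in> S"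
    then show "m \<le> k" using eq before by (metis less_imp_le not_le)
  qed
  then show ?thesis using eq m assms(3,4) by (simp add: first_return_def m_def)
qed

lemma edge_eq_dart_pair:
  assumes "comb_map G" "e \<in> edges G" "x \<in> e"
  shows "e = {x, alp G x}"
  using assms by (auto simp: edges_def)

lemma Union_edges_subset_darts: "comb_map G \<Longrightarrow> \<Union>(edges G) \<subseteq> darts G"
  unfolding comb_map_def edges_def by (auto simp: permutes_in_image)

lemma alp_in_Union_edges:
  assumes "comb_map G" "A \<subseteq> edges G" "x \<in> \<Union>A"
  shows "alp G x \<in> \<Union>A"
  using assms edge_eq_dart_pair[OF assms(1)] by blast

lemma Union_edges_Diff:
  assumes G: "comb_map G" and A: "A \<subseteq> edges G"
  shows "\<Union>(edges G - A) = darts G - \<Union>A"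
proof
  show "\<Union>(edges G - A) \<subseteq> darts G - \<Union>A"
    using Union_edges_subset_darts[OF G] edge_eq_dart_pair[OF G] A by blast
  show "darts G - \<Union>A \<subseteq> \<Union>(edges G - A)"
    by (auto simp: edges_def)
qed

lemma first_return_contract_dual:
  assumes G: "comb_map G" and S: "S \<subseteq> darts G" "\<And>x. x \<in> S \<Longrightarrow> alp G x \<in> S"
  shows "first_return (sig G \<circ> alp G \<circ> restr (alp G) (darts G - S)) S
       = first_return (sig G) S \<circ> restr (alp G) S"
  \<comment> \<open>the rotation being iterated agrees with sig G off S, and maps x \<in> S to sig G (alp G x)\<close>
proof
  fix x
  let ?h = "sig G \<circ> alp G \<circ> restr (alp G) (darts G - S)"
  show "first_return ?h S x = (first_return (sig G) S \<circ> restr (alp G) S) x"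
  proof (cases "x \<in> S")
    case False
    then show ?thesis by (simp add: first_return_def restr_def)
  next
    case True
    have agree: "?h y = sig G y" if "y \<notin> S" for y
      using G that unfolding comb_map_def by (auto simp: restr_def permutes_not_in)
    have "permutation (sig G)"
      using G unfolding comb_map_def by (auto simp: permutation_permutes)
    then obtain n where "0 < n" "(sig G ^^ n) (alp G x) = alp G x"
      using permutation_self by metis
    then have returns: "\<exists>k>0. (sig G ^^ k) (alp G x) \<in> S"
      using S(2)[OF True] by auto
    have "first_return ?h S x = first_return (sig G) S (alp G x)"
      using True S(2)[OF True] S(1)
      by (intro first_return_eqI[OF agree _ _ _ returns]) (auto simp: restr_def)
    then show ?thesis using True by (simp add: restr_def)
  qed
qed

text \<open>The iso fields differ: dual fills them with junk values of inv_into.\<close>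
lemma dual_contract_dual:
  assumes G: "comb_map G" and A: "A \<subseteq> edges G"
  shows "(dual (contract (dual G) (edges G - A)))\<lparr>iso := Inr\<rparr> = del G A"
proof -
  define C where "C = contract (dual G) (edges G - A)"
  define D where "D = del G A"
  have S: "\<Union>A \<subseteq> darts G" "\<And>x. x \<in> \<Union>A \<Longrightarrow> alp G x \<in> \<Union>A"
    using Union_edges_subset_darts[OF G] A alp_in_Union_edges[OF G A] by auto
  have darts: "darts G - (darts G - \<Union>A) = \<Union>A"
    using S(1) by blast
  have D: "darts D = \<Union>A" "alp D = restr (alp G) (\<Union>A)" "sig D = first_return (sig G) (\<Union>A)"
    "verts D = verts G" "vt D = vt G"
    "faces D = {Inl (orbit (sig D \<circ> alp D) d) | d. d \<in> \<Union>A} \<union> Inr ` (verts G - vt G ` \<Union>A)"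
    "fc D = (\<lambda>d. Inl (orbit (sig D \<circ> alp D) d))" "iso D = Inr"
    by (simp_all add: D_def del_def sub_def Let_def)
  have sig_C: "sig C = sig D \<circ> alp D"
    using first_return_contract_dual[OF G S]
    by (simp add: C_def D(2,3) contract_def Let_def darts Union_edges_Diff[OF G A])
  have C: "darts C = \<Union>A" "alp C = alp D" "faces C = verts D" "fc C = vt D"
    "verts C = {Inl (orbit (sig C) d) | d. d \<in> \<Union>A} \<union> Inr ` (verts G - vt G ` \<Union>A)"
    "vt C = (\<lambda>d. Inl (orbit (sig C) d))"
    by (simp_all add: C_def D contract_def Let_def darts Union_edges_Diff[OF G A])
  have alp_D: "alp D \<circ> alp D = id"
    using G S(2) by (auto simp: D(2) restr_def fun_eq_iff)
  show ?thesis
    unfolding C_def[symmetric] D_def[symmetric]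
  proof (rule rg.equality)
    show "sig (dual C\<lparr>iso := Inr\<rparr>) = sig D"
      using alp_D by (simp add: sig_C C(2) comp_assoc)
  qed (simp_all add: C D sig_C)
qed

lemma q_eq_p_dual:
  assumes G: "comb_map G"
  shows "q gam ns G P w = p gam ns (dual G) P w"
proof -
  have "q1 gam ns (del G A) P w = p1 gam ns (contract (dual G) (edges G - A)) P w"
    if "A \<subseteq> edges G" for A
    using dual_contract_dual[OF G that] q1_iso_update p1_eq_q1_dual by metis
  then show ?thesis
    unfolding q_def p_def edges_dual by (intro sum.cong) auto
qed

theorem lemma5p3:
  fixes G :: "('d,'v,'f) rg"
    and PV :: "'v set set" and wV :: "'v set \<Rightarrow> nat"
    and PF :: "'f set set" and wF :: "'f set \<Rightarrow> nat"
    and gam :: real and ns :: "nat list"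
  assumes "ribbon_graph G"
    and "partition_on (verts G) PV"
    and "partition_on (faces G) PF"
    and "ns \<noteq> []" and "\<forall>n\<in>set ns. 0 < n" and "1 \<in> set ns"
    and "gam = real (\<Sum>n\<leftarrow>ns. n ^ 2)"
  shows "q gam ns G PV wV = p gam ns (dual G) PV wV
       \<and> p gam ns G PF wF = q gam ns (dual G) PF wF"
proof -
  have G: "comb_map G"
    using assms(1) by (rule ribbon_graph_imp_comb_map)
  have "q gam ns (dual G) PF wF = p gam ns (dual (dual G)) PF wF"
    using q_eq_p_dual[OF comb_map_dual[OF G]] .
  also have "\<dots> = p gam ns G PF wF"
    using p_iso_update dual_dual[OF G] by metis
  finally show ?thesis
    using q_eq_p_dual[OF G] by simp
qed

end
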